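(* Let $P_{B(K^{\pm})}$ be the unital associative complex algebra generated by elements $B_i^{+}, B_i^{-}$ ($i=1,2,\ldots$) and $K^{+}, K^{-}$ subject to the relations $$\big[\{B_i^{\xi}, B_j^{\eta}\}, B_k^{\epsilon}\big] = (\epsilon-\eta)\delta_{jk}B_i^{\xi} + (\epsilon-\xi)\delta_{ik}B_j^{\eta}\quad(\xi,\eta,\epsilon\in\{\pm1\},\ i,j,k=1,2,\ldots),$$ $$K^{+}K^{-} = K^{-}K^{+} = 1,\qquad \{K^{+}, B_i^{\pm}\} = 0 = \{K^{-}, B_i^{\pm}\}\quad (i=1,2,\ldots).$$ Then there is a unique algebra homomorphism $\Delta: P_{B(K^{\pm})}\to P_{B(K^{\pm})}\otimes P_{B(K^{\pm})}$ (ordinary tensor product algebra, $(a\otimes b)(c\otimes d)=ac\otimes bd$), a unique algebra homomorphism $\varepsilon: P_{B(K^{\pm})}\to\mathbb{C}$ and a unique algebra anti-homomorphism $S: P_{B(K^{\pm})}\to P_{B(K^{\pm})}$ with $$\Delta(B_i^{\pm}) = B_i^{\pm}\otimes 1 + K^{\pm}\otimes B_i^{\pm},\quad \Delta(K^{\pm}) = K^{\pm}\otimes K^{\pm},\quad \varepsilon(B_i^{\pm}) = 0,\quad \varepsilon(K^{\pm}) = 1,$$ $$S(B_i^{\pm}) = B_i^{\pm}K^{\mp},\qquad S(K^{\pm}) = K^{\mp},$$ for all $i=1,2,\ldots$, and with these maps $P_{B(K^{\pm})}$ is an (ordinary) Hopf algebra.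
   Context: $[A,B]=AB-BA$ and $\{A,B\}=AB+BA$; in the relations the signs $\xi,\eta,\epsilon$ are read as the integers $\pm1$. In the formulas for $\Delta$ and $S$ the upper signs correspond (e.g. $\Delta(B_i^{+}) = B_i^{+}\otimes 1 + K^{+}\otimes B_i^{+}$, $S(B_i^{+}) = B_i^{+}K^{-}$). *)

theory Defs
  imports "HOL-Library.Poly_Mapping" "HOL-Library.Product_Plus" Complex_Main
begin

datatype 'g word = Word "'g list"

instantiation word :: (type) monoid_add
begin
definition zero_word :: "'g word" where "zero_word = Word []"
fun plus_word :: "'g word \<Rightarrow> 'g word \<Rightarrow> 'g word" where
  "plus_word (Word a) (Word b) = Word (a @ b)"
instance
proof
  fix a b c :: "'g word"
  show "a + b + c = a + (b + c)" by (cases a; cases b; cases c) simp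
  show "0 + a = a" by (cases a) (simp add: zero_word_def)
  show "a + 0 = a" by (cases a) (simp add: zero_word_def)
qed
end

datatype sgn = Pl | Mi

fun sval :: "sgn \<Rightarrow> complex" where
  "sval Pl = 1" | "sval Mi = -1"

fun sneg :: "sgn \<Rightarrow> sgn" where
  "sneg Pl = Mi" | "sneg Mi = Pl"

text \<open>B s i stands for B_{i+1}^s (indices shifted to start at 0), K s for K^s.\<close>
datatype gen = B sgn nat | K sgn

text \<open>Free unital associative complex algebra on gen: finitely supported
  complex functions on words, with convolution product.\<close>
type_synonym F = "gen word \<Rightarrow>\<^sub>0 complex"
type_synonym F2 = "(gen word \<times> gen word) \<Rightarrow>\<^sub>0 complex"   (* F \<otimes> F *)
type_synonym F3 = "(gen word \<times> gen word \<times> gen word) \<Rightarrow>\<^sub>0 complex"  (* F \<otimes> F \<otimes> F *)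

definition smul :: "complex \<Rightarrow> ('k::monoid_add \<Rightarrow>\<^sub>0 complex) \<Rightarrow> ('k \<Rightarrow>\<^sub>0 complex)" where
  "smul c x = Poly_Mapping.single 0 c * x"

definition mono :: "'k \<Rightarrow> ('k \<Rightarrow>\<^sub>0 complex)" where
  "mono w = Poly_Mapping.single w 1"

definition X :: "gen \<Rightarrow> F" where
  "X g = mono (Word [g])"

definition Bg :: "sgn \<Rightarrow> nat \<Rightarrow> F" where "Bg s i = X (B s i)"
definition Kg :: "sgn \<Rightarrow> F" where "Kg s = X (K s)"

definition comm :: "'a::ring \<Rightarrow> 'a \<Rightarrow> 'a" where "comm a b = a * b - b * a"
definition acomm :: "'a::ring \<Rightarrow> 'a \<Rightarrow> 'a" where "acomm a b = a * b + b * a"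

definition tens :: "F \<Rightarrow> F \<Rightarrow> F2" where
  "tens a b = (\<Sum>u\<in>Poly_Mapping.keys a. \<Sum>v\<in>Poly_Mapping.keys b.
      Poly_Mapping.single (u, v) (Poly_Mapping.lookup a u * Poly_Mapping.lookup b v))"

definition tens21 :: "F2 \<Rightarrow> F \<Rightarrow> F3" where
  "tens21 a b = (\<Sum>p\<in>Poly_Mapping.keys a. \<Sum>t\<in>Poly_Mapping.keys b.
      Poly_Mapping.single (fst p, snd p, t) (Poly_Mapping.lookup a p * Poly_Mapping.lookup b t))"

definition tens12 :: "F \<Rightarrow> F2 \<Rightarrow> F3" where
  "tens12 a b = (\<Sum>u\<in>Poly_Mapping.keys a. \<Sum>p\<in>Poly_Mapping.keys b.
      Poly_Mapping.single (u, fst p, snd p) (Poly_Mapping.lookup a u * Poly_Mapping.lookup b p))"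

definition tlift :: "(F \<Rightarrow> F \<Rightarrow> ('k::monoid_add \<Rightarrow>\<^sub>0 complex)) \<Rightarrow> F2 \<Rightarrow> ('k \<Rightarrow>\<^sub>0 complex)" where
  "tlift h z = (\<Sum>p\<in>Poly_Mapping.keys z. smul (Poly_Mapping.lookup z p) (h (mono (fst p)) (mono (snd p))))"

inductive_set ideal_gen :: "'a::ring set \<Rightarrow> 'a set" for R :: "'a set" where
  zero: "0 \<in> ideal_gen R"
| gen: "r \<in> R \<Longrightarrow> r \<in> ideal_gen R"
| add: "x \<in> ideal_gen R \<Longrightarrow> y \<in> ideal_gen R \<Longrightarrow> x + y \<in> ideal_gen R"
| lmult: "x \<in> ideal_gen R \<Longrightarrow> a * x \<in> ideal_gen R"
| rmult: "x \<in> ideal_gen R \<Longrightarrow> x * a \<in> ideal_gen R"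

definition Rel :: "F set" where
  "Rel =
     {comm (acomm (Bg xi i) (Bg eta j)) (Bg ep k)
        - (smul ((sval ep - sval eta) * (if j = k then 1 else 0)) (Bg xi i)
           + smul ((sval ep - sval xi) * (if i = k then 1 else 0)) (Bg eta j))
      | xi eta ep i j k. True}
   \<union> {Kg Pl * Kg Mi - 1, Kg Mi * Kg Pl - 1}
   \<union> {acomm (Kg s) (Bg t i) | s t i. True}"

text \<open>P = F / I,  P\<otimes>P = F2 / I2,  P\<otimes>P\<otimes>P = F3 / I3.\<close>
definition I1 :: "F set" where "I1 = ideal_gen Rel"
definition I2 :: "F2 set" where
  "I2 = ideal_gen ({tens r 1 | r. r \<in> Rel} \<union> {tens 1 r | r. r \<in> Rel})"
definition I3 :: "F3 set" where
  "I3 = ideal_gen ({tens21 (tens r 1) 1 | r. r \<in> Rel} \<union> {tens21 (tens 1 r) 1 | r. r \<in> Rel}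
                    \<union> {tens21 (tens 1 1) r | r. r \<in> Rel})"

text \<open>D represents an algebra homomorphism F/Ia \<rightarrow> F'/Ib.\<close>
definition alg_hom_mod :: "('k::monoid_add \<Rightarrow>\<^sub>0 complex) set \<Rightarrow> ('l::monoid_add \<Rightarrow>\<^sub>0 complex) set
    \<Rightarrow> (('k \<Rightarrow>\<^sub>0 complex) \<Rightarrow> ('l \<Rightarrow>\<^sub>0 complex)) \<Rightarrow> bool" where
  "alg_hom_mod Ia Ib D \<longleftrightarrow>
     (\<forall>x y. x - y \<in> Ia \<longrightarrow> D x - D y \<in> Ib) \<and>
     (\<forall>x y. D (x + y) - (D x + D y) \<in> Ib) \<and>
     (\<forall>c x. D (smul c x) - smul c (D x) \<in> Ib) \<and>
     (\<forall>x y. D (x * y) - D x * D y \<in> Ib) \<and>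
     D 1 - 1 \<in> Ib"

text \<open>D represents an algebra anti-homomorphism F/Ia \<rightarrow> F'/Ib.\<close>
definition alg_antihom_mod :: "('k::monoid_add \<Rightarrow>\<^sub>0 complex) set \<Rightarrow> ('l::monoid_add \<Rightarrow>\<^sub>0 complex) set
    \<Rightarrow> (('k \<Rightarrow>\<^sub>0 complex) \<Rightarrow> ('l \<Rightarrow>\<^sub>0 complex)) \<Rightarrow> bool" where
  "alg_antihom_mod Ia Ib D \<longleftrightarrow>
     (\<forall>x y. x - y \<in> Ia \<longrightarrow> D x - D y \<in> Ib) \<and>
     (\<forall>x y. D (x + y) - (D x + D y) \<in> Ib) \<and>
     (\<forall>c x. D (smul c x) - smul c (D x) \<in> Ib) \<and>
     (\<forall>x y. D (x * y) - D y * D x \<in> Ib) \<and>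
     D 1 - 1 \<in> Ib"

text \<open>e represents an algebra homomorphism F/Ia \<rightarrow> \<complex>.\<close>
definition char_mod :: "('k::monoid_add \<Rightarrow>\<^sub>0 complex) set \<Rightarrow> (('k \<Rightarrow>\<^sub>0 complex) \<Rightarrow> complex) \<Rightarrow> bool" where
  "char_mod Ia e \<longleftrightarrow>
     (\<forall>x y. x - y \<in> Ia \<longrightarrow> e x = e y) \<and>
     (\<forall>x y. e (x + y) = e x + e y) \<and>
     (\<forall>c x. e (smul c x) = c * e x) \<and>
     (\<forall>x y. e (x * y) = e x * e y) \<and>
     e 1 = 1"

definition Delta_gens :: "(F \<Rightarrow> F2) \<Rightarrow> bool" where
  "Delta_gens D \<longleftrightarrow>
     (\<forall>s i. D (Bg s i) - (tens (Bg s i) 1 + tens (Kg s) (Bg s i)) \<in> I2) \<and>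
     (\<forall>s. D (Kg s) - tens (Kg s) (Kg s) \<in> I2)"

definition eps_gens :: "(F \<Rightarrow> complex) \<Rightarrow> bool" where
  "eps_gens e \<longleftrightarrow> (\<forall>s i. e (Bg s i) = 0) \<and> (\<forall>s. e (Kg s) = 1)"

definition S_gens :: "(F \<Rightarrow> F) \<Rightarrow> bool" where
  "S_gens S \<longleftrightarrow>
     (\<forall>s i. S (Bg s i) - Bg s i * Kg (sneg s) \<in> I1) \<and>
     (\<forall>s. S (Kg s) - Kg (sneg s) \<in> I1)"

definition hopf_axioms :: "(F \<Rightarrow> F2) \<Rightarrow> (F \<Rightarrow> complex) \<Rightarrow> (F \<Rightarrow> F) \<Rightarrow> bool" where
  "hopf_axioms D e S \<longleftrightarrow>
     alg_hom_mod I1 I2 D \<and> char_mod I1 e \<and>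
     \<comment> \<open>coassociativity: (\<Delta>\<otimes>id)\<Delta> = (id\<otimes>\<Delta>)\<Delta>\<close>
     (\<forall>x. tlift (\<lambda>a b. tens21 (D a) b) (D x) - tlift (\<lambda>a b. tens12 a (D b)) (D x) \<in> I3) \<and>
     \<comment> \<open>counit: (\<epsilon>\<otimes>id)\<Delta> = id = (id\<otimes>\<epsilon>)\<Delta>\<close>
     (\<forall>x. tlift (\<lambda>a b. smul (e a) b) (D x) - x \<in> I1) \<and>
     (\<forall>x. tlift (\<lambda>a b. smul (e b) a) (D x) - x \<in> I1) \<and>
     \<comment> \<open>antipode: m(S\<otimes>id)\<Delta> = \<eta>\<epsilon> = m(id\<otimes>S)\<Delta>\<close>
     (\<forall>x. tlift (\<lambda>a b. S a * b) (D x) - smul (e x) 1 \<in> I1) \<and>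
     (\<forall>x. tlift (\<lambda>a b. a * S b) (D x) - smul (e x) 1 \<in> I1)"

end

theory Submission
  imports Defs
begin

text \<open>
  On F, \<Delta>, \<epsilon> and S are the homomorphisms (an anti-homomorphism for S) with the
  prescribed values on generators, and they descend to P because these values satisfy the
  defining relations again.  For \<Delta>, the elements x \<otimes> 1 and 1 \<otimes> y form two commuting copies
  of P inside P \<otimes> P; since K anticommutes with every B, the factors K in front of the second
  legs of B \<otimes> 1 + K \<otimes> B can be moved to the front, and the signs this produces cancel in each
  relation.  For S, the elements B K^- and K^- satisfy the relations of the opposite algebra.
  Coassociativity and the counit laws compare algebra homomorphisms on F, which agree because
  they agree on generators.  For the antipode laws, the set of elements on which they hold
  modulo I1 is closed under products because S reverses products, so again only generators
  need checking.  Uniqueness holds because F is generated by the generators.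
\<close>

section \<open>Finitely supported functions and ideals\<close>

lemma lookup_smul: "Poly_Mapping.lookup (smul c x) k = c * Poly_Mapping.lookup x k"
  unfolding smul_def mult_map_scale_conv_mult[symmetric]
  by (simp add: Poly_Mapping.map.rep_eq when_def)

lemma poly_mapping_induct_single [case_names zero single add]:
  fixes x :: "'a \<Rightarrow>\<^sub>0 complex"
  assumes "P 0" "\<And>k c. P (Poly_Mapping.single k c)" "\<And>x y. P x \<Longrightarrow> P y \<Longrightarrow> P (x + y)"
  shows "P x"
proof -
  have sum_singles: "x = (\<Sum>k\<in>Poly_Mapping.keys x. Poly_Mapping.single k (Poly_Mapping.lookup x k))"
    by (rule poly_mapping_eqI) (simp add: lookup_sum lookup_single when_def in_keys_iff)
  have "P (\<Sum>k\<in>A. Poly_Mapping.single k (Poly_Mapping.lookup x k))" if "finite A" for A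
    using that by (induction A rule: finite_induct) (auto intro: assms)
  then show ?thesis by (subst sum_singles) simp
qed

lemma single_zero_commute:
  "Poly_Mapping.single 0 c * (x::'k::monoid_add \<Rightarrow>\<^sub>0 complex) = x * Poly_Mapping.single 0 c"
proof (induction x rule: poly_mapping_induct_single)
  case (single k d) then show ?case by (simp add: mult_single mult.commute)
qed (auto simp: distrib_left distrib_right)

lemma smul_mult_left: "smul c (x * y) = smul c x * (y::'k::monoid_add \<Rightarrow>\<^sub>0 complex)"
  by (simp add: smul_def mult.assoc)

lemma smul_mult_right: "smul c (x * y) = x * smul c (y::'k::monoid_add \<Rightarrow>\<^sub>0 complex)"
proof -
  have "Poly_Mapping.single 0 c * (x * y) = (x * Poly_Mapping.single 0 c) * y"
    by (simp only: mult.assoc[symmetric] single_zero_commute)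
  then show ?thesis by (simp add: smul_def mult.assoc)
qed

lemma smul_add: "smul c (x + y) = smul c x + smul c y"
  by (rule poly_mapping_eqI) (simp add: lookup_smul lookup_add algebra_simps)

lemma smul_add_left: "smul (c + d) x = smul c x + smul d x"
  by (rule poly_mapping_eqI) (simp add: lookup_smul lookup_add algebra_simps)

lemma smul_diff: "smul c (x - y) = smul c x - smul c y"
  by (rule poly_mapping_eqI) (simp add: lookup_smul lookup_minus algebra_simps)

lemma smul_smul: "smul c (smul d x) = smul (c * d) x"
  by (rule poly_mapping_eqI) (simp add: lookup_smul)

lemma smul_one [simp]: "smul 1 x = x"
  by (rule poly_mapping_eqI) (simp add: lookup_smul)

lemma smul_zero_left [simp]: "smul 0 x = 0"
  by (rule poly_mapping_eqI) (simp add: lookup_smul)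

lemma smul_zero [simp]: "smul c 0 = 0"
  by (rule poly_mapping_eqI) (simp add: lookup_smul)

lemma smul_single: "smul c (Poly_Mapping.single k d) = Poly_Mapping.single k (c * d)"
  by (rule poly_mapping_eqI) (simp add: lookup_smul lookup_single when_def)

lemma mono_add: "mono (u + v) = mono u * (mono v :: 'k::monoid_add \<Rightarrow>\<^sub>0 complex)"
  by (simp add: mono_def mult_single)

lemma mono_zero [simp]: "mono 0 = (1 :: 'k::monoid_add \<Rightarrow>\<^sub>0 complex)"
  by (simp add: mono_def)

lemma ideal_gen_uminus: "x \<in> ideal_gen R \<Longrightarrow> - (x::'a::ring_1) \<in> ideal_gen R"
  using ideal_gen.lmult[of x R "-1"] by simp

lemma ideal_gen_diff: "x \<in> ideal_gen R \<Longrightarrow> y \<in> ideal_gen R \<Longrightarrow> (x::'a::ring_1) - y \<in> ideal_gen R"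
  using ideal_gen.add[of x R "-y"] ideal_gen_uminus[of y R] by simp

lemma ideal_gen_sandwich: "x \<in> ideal_gen R \<Longrightarrow> a * x * b \<in> ideal_gen R"
  by (intro ideal_gen.rmult ideal_gen.lmult)

lemma ideal_gen_smul: "x \<in> ideal_gen R \<Longrightarrow> smul c x \<in> ideal_gen R"
  unfolding smul_def by (rule ideal_gen.lmult)

lemma ideal_gen_cong_sym: "x - y \<in> ideal_gen R \<Longrightarrow> y - (x::'a::ring_1) \<in> ideal_gen R"
  using ideal_gen_uminus[of "x - y" R] by simp

lemma ideal_gen_cong_trans:
  "x - y \<in> ideal_gen R \<Longrightarrow> y - z \<in> ideal_gen R \<Longrightarrow> x - (z::'a::ring_1) \<in> ideal_gen R"
  using ideal_gen.add[of "x - y" R "y - z"] by simp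

lemma ideal_gen_cong_add:
  "x - x' \<in> ideal_gen R \<Longrightarrow> y - y' \<in> ideal_gen R \<Longrightarrow> (x + y) - (x' + (y'::'a::ring_1)) \<in> ideal_gen R"
  using ideal_gen.add[of "x - x'" R "y - y'"] by (simp add: algebra_simps)

lemma ideal_gen_cong_diff:
  "x - x' \<in> ideal_gen R \<Longrightarrow> y - y' \<in> ideal_gen R \<Longrightarrow> (x - y) - (x' - (y'::'a::ring_1)) \<in> ideal_gen R"
  using ideal_gen_diff[of "x - x'" R "y - y'"] by (simp add: algebra_simps)

lemma ideal_gen_cong_uminus: "x - x' \<in> ideal_gen R \<Longrightarrow> (- x) - (- (x'::'a::ring_1)) \<in> ideal_gen R"
  using ideal_gen_uminus[of "x - x'" R] by (simp add: algebra_simps)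

lemma ideal_gen_cong_mult:
  assumes "x - x' \<in> ideal_gen R" "y - y' \<in> ideal_gen R"
  shows "(x * y) - (x' * (y'::'a::ring_1)) \<in> ideal_gen R"
proof -
  have "(x - x') * y + x' * (y - y') \<in> ideal_gen R"
    using assms by (intro ideal_gen.add ideal_gen.rmult ideal_gen.lmult)
  then show ?thesis by (simp add: algebra_simps)
qed

lemma ideal_gen_cong_smul: "x - x' \<in> ideal_gen R \<Longrightarrow> smul c x - smul c x' \<in> ideal_gen R"
  using ideal_gen_smul[of "x - x'" R c] by (simp add: smul_diff)

section \<open>Linear extension and tensor products\<close>

definition lin_ext :: "(complex \<Rightarrow> 'b::ring_1) \<Rightarrow> ('k \<Rightarrow> 'b) \<Rightarrow> ('k \<Rightarrow>\<^sub>0 complex) \<Rightarrow> 'b" where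
  "lin_ext \<sigma> f x = (\<Sum>k\<in>Poly_Mapping.keys x. \<sigma> (Poly_Mapping.lookup x k) * f k)"

locale central_scalars =
  fixes \<sigma> :: "complex \<Rightarrow> 'b::ring_1"
  assumes scalar_add: "\<sigma> (a + b) = \<sigma> a + \<sigma> b"
    and scalar_mult: "\<sigma> (a * b) = \<sigma> a * \<sigma> b"
    and scalar_one: "\<sigma> 1 = 1"
    and scalar_central: "\<sigma> a * y = y * \<sigma> a"
begin

lemma scalar_zero: "\<sigma> 0 = 0"
  using scalar_add[of 0 0] by simp

lemma lin_ext_superset:
  assumes "finite A" "Poly_Mapping.keys x \<subseteq> A"
  shows "lin_ext \<sigma> f x = (\<Sum>k\<in>A. \<sigma> (Poly_Mapping.lookup x k) * f k)"
  unfolding lin_ext_def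
  by (rule sum.mono_neutral_left) (use assms in \<open>auto simp: in_keys_iff scalar_zero\<close>)

lemma lin_ext_add: "lin_ext \<sigma> f (x + y) = lin_ext \<sigma> f x + lin_ext \<sigma> f y"
proof -
  let ?A = "Poly_Mapping.keys x \<union> Poly_Mapping.keys y"
  have "lin_ext \<sigma> f (x + y) = (\<Sum>k\<in>?A. \<sigma> (Poly_Mapping.lookup (x + y) k) * f k)"
    by (rule lin_ext_superset) (auto dest: set_mp[OF Poly_Mapping.keys_add])
  also have "\<dots> = (\<Sum>k\<in>?A. \<sigma> (Poly_Mapping.lookup x k) * f k) + (\<Sum>k\<in>?A. \<sigma> (Poly_Mapping.lookup y k) * f k)"
    by (simp add: lookup_add scalar_add distrib_right sum.distrib)
  also have "\<dots> = lin_ext \<sigma> f x + lin_ext \<sigma> f y"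
    by (subst (1 2) lin_ext_superset[of ?A]) auto
  finally show ?thesis .
qed

lemma lin_ext_zero [simp]: "lin_ext \<sigma> f 0 = 0"
  by (simp add: lin_ext_def)

lemma lin_ext_single [simp]: "lin_ext \<sigma> f (Poly_Mapping.single k c) = \<sigma> c * f k"
  by (cases "c = 0") (simp_all add: lin_ext_def scalar_zero)

lemma lin_ext_diff: "lin_ext \<sigma> f (x - y) = lin_ext \<sigma> f x - lin_ext \<sigma> f y"
  using lin_ext_add[of f "x - y" y] by (simp add: algebra_simps)

lemma lin_ext_smul: "lin_ext \<sigma> f (smul c x) = \<sigma> c * lin_ext \<sigma> f x"
proof (induction x rule: poly_mapping_induct_single)
  case (single k d) then show ?case by (simp add: smul_single scalar_mult mult.assoc)
qed (simp_all add: smul_add lin_ext_add distrib_left)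

lemma lin_ext_one: "f 0 = 1 \<Longrightarrow> lin_ext \<sigma> f 1 = 1"
  using lin_ext_single[of f 0 1] by (simp add: scalar_one)

lemma lin_ext_mult:
  assumes "\<And>u v. f (u + v) = f u * f v"
  shows "lin_ext \<sigma> f (x * y) = lin_ext \<sigma> f x * lin_ext \<sigma> f (y::'k::monoid_add \<Rightarrow>\<^sub>0 complex)"
proof (induction x rule: poly_mapping_induct_single)
  case (single u c)
  show ?case
  proof (induction y rule: poly_mapping_induct_single)
    case (single v d)
    have "\<sigma> (c * d) * f (u + v) = \<sigma> c * (\<sigma> d * f u) * f v"
      by (simp add: assms scalar_mult mult.assoc)
    also have "\<dots> = \<sigma> c * f u * (\<sigma> d * f v)"
      by (simp only: scalar_central[of d "f u"] mult.assoc)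
    finally show ?case by (simp add: mult_single)
  qed (simp_all add: distrib_left lin_ext_add)
qed (simp_all add: distrib_right lin_ext_add)

lemma lin_ext_antimult:
  assumes "\<And>u v. f (u + v) = f v * f u"
  shows "lin_ext \<sigma> f (x * y) = lin_ext \<sigma> f y * lin_ext \<sigma> f (x::'k::monoid_add \<Rightarrow>\<^sub>0 complex)"
proof (induction x rule: poly_mapping_induct_single)
  case (single u c)
  show ?case
  proof (induction y rule: poly_mapping_induct_single)
    case (single v d)
    have "\<sigma> (c * d) * f (u + v) = \<sigma> d * (\<sigma> c * f v) * f u"
      using scalar_mult[of d c] by (simp add: assms mult.assoc mult.commute[of d c])
    also have "\<dots> = \<sigma> d * f v * (\<sigma> c * f u)"
      by (simp only: scalar_central[of c "f v"] mult.assoc)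
    finally show ?case by (simp add: mult_single)
  qed (simp_all add: distrib_right distrib_left lin_ext_add)
qed (simp_all add: distrib_left distrib_right lin_ext_add)

end

interpretation constant_scalars: central_scalars "\<lambda>c. Poly_Mapping.single (0::'k::monoid_add) c"
  by unfold_locales (simp_all add: single_add mult_single single_zero_commute)

interpretation complex_scalars: central_scalars "\<lambda>c::complex. c"
  by unfold_locales simp_all

lemma lookup_tens:
  "Poly_Mapping.lookup (tens a b) (u, v) = Poly_Mapping.lookup a u * Poly_Mapping.lookup b v"
proof -
  have "Poly_Mapping.lookup (tens a b) (u, v) =
    (\<Sum>u'\<in>Poly_Mapping.keys a. if u' = u then (\<Sum>v'\<in>Poly_Mapping.keys b.
       if v' = v then Poly_Mapping.lookup a u * Poly_Mapping.lookup b v else 0) else 0)"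
    unfolding tens_def lookup_sum lookup_single when_def
    by (intro sum.cong refl) auto
  also have "\<dots> = Poly_Mapping.lookup a u * Poly_Mapping.lookup b v"
    by (simp add: in_keys_iff)
  finally show ?thesis .
qed

lemma lookup_tens21:
  "Poly_Mapping.lookup (tens21 z t) (u, v, w) = Poly_Mapping.lookup z (u, v) * Poly_Mapping.lookup t w"
proof -
  have "Poly_Mapping.lookup (tens21 z t) (u, v, w) =
    (\<Sum>p\<in>Poly_Mapping.keys z. if p = (u, v) then (\<Sum>t'\<in>Poly_Mapping.keys t.
       if t' = w then Poly_Mapping.lookup z (u, v) * Poly_Mapping.lookup t w else 0) else 0)"
    unfolding tens21_def lookup_sum lookup_single when_def
    apply (intro sum.cong refl)
    subgoal for p by (cases "p = (u, v)") (auto intro!: sum.neutral)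
    done
  also have "\<dots> = Poly_Mapping.lookup z (u, v) * Poly_Mapping.lookup t w"
    by (simp add: in_keys_iff)
  finally show ?thesis .
qed

lemma lookup_tens12:
  "Poly_Mapping.lookup (tens12 a z) (u, v, w) = Poly_Mapping.lookup a u * Poly_Mapping.lookup z (v, w)"
proof -
  have "Poly_Mapping.lookup (tens12 a z) (u, v, w) =
    (\<Sum>u'\<in>Poly_Mapping.keys a. if u' = u then (\<Sum>p\<in>Poly_Mapping.keys z.
       if p = (v, w) then Poly_Mapping.lookup a u * Poly_Mapping.lookup z (v, w) else 0) else 0)"
    unfolding tens12_def lookup_sum lookup_single when_def
    by (intro sum.cong refl) auto
  also have "\<dots> = Poly_Mapping.lookup a u * Poly_Mapping.lookup z (v, w)"
    by (simp add: in_keys_iff)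
  finally show ?thesis .
qed

lemma tens_add_left: "tens (a + a') b = tens a b + tens a' b"
  by (rule poly_mapping_eqI) (auto simp: lookup_tens lookup_add algebra_simps)
lemma tens_add_right: "tens a (b + b') = tens a b + tens a b'"
  by (rule poly_mapping_eqI) (auto simp: lookup_tens lookup_add algebra_simps)
lemma tens_single:
  "tens (Poly_Mapping.single u c) (Poly_Mapping.single v d) = Poly_Mapping.single (u, v) (c * d)"
  by (rule poly_mapping_eqI) (auto simp: lookup_tens lookup_single when_def split: if_splits)

lemma tens21_add_left: "tens21 (a + a') b = tens21 a b + tens21 a' b"
  by (rule poly_mapping_eqI) (auto simp: lookup_tens21 lookup_add algebra_simps)
lemma tens21_add_right: "tens21 a (b + b') = tens21 a b + tens21 a b'"
  by (rule poly_mapping_eqI) (auto simp: lookup_tens21 lookup_add algebra_simps)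
lemma tens21_single:
  "tens21 (Poly_Mapping.single (u, v) c) (Poly_Mapping.single w d) = Poly_Mapping.single (u, v, w) (c * d)"
  by (rule poly_mapping_eqI) (auto simp: lookup_tens21 lookup_single when_def split: if_splits)

lemma tens12_add_left: "tens12 (a + a') b = tens12 a b + tens12 a' b"
  by (rule poly_mapping_eqI) (auto simp: lookup_tens12 lookup_add algebra_simps)
lemma tens12_add_right: "tens12 a (b + b') = tens12 a b + tens12 a b'"
  by (rule poly_mapping_eqI) (auto simp: lookup_tens12 lookup_add algebra_simps)
lemma tens12_single:
  "tens12 (Poly_Mapping.single u c) (Poly_Mapping.single (v, w) d) = Poly_Mapping.single (u, v, w) (c * d)"
  by (rule poly_mapping_eqI) (auto simp: lookup_tens12 lookup_single when_def split: if_splits)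

lemma bilinear_monomial_mult:
  fixes \<beta> :: "('a::monoid_add \<Rightarrow>\<^sub>0 complex) \<Rightarrow> ('b::monoid_add \<Rightarrow>\<^sub>0 complex) \<Rightarrow> ('c::monoid_add \<Rightarrow>\<^sub>0 complex)"
  assumes add_left: "\<And>a a' b. \<beta> (a + a') b = \<beta> a b + \<beta> a' b"
    and add_right: "\<And>a b b'. \<beta> a (b + b') = \<beta> a b + \<beta> a b'"
    and monomial: "\<And>u c v d. \<beta> (Poly_Mapping.single u c) (Poly_Mapping.single v d) = Poly_Mapping.single (\<phi> u v) (c * d)"
    and hom: "\<And>u u' v v'. \<phi> (u + u') (v + v') = \<phi> u v + \<phi> u' v'"
  shows "\<beta> (a * a') (b * b') = \<beta> a b * \<beta> a' b'"
proof -
  have zero: "\<beta> 0 b = 0" "\<beta> a 0 = 0" for a b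
    using add_left[of 0 0 b] add_right[of a 0 0] by simp_all
  show ?thesis
  proof (induction a rule: poly_mapping_induct_single)
    case (single u c)
    show ?case
    proof (induction a' rule: poly_mapping_induct_single)
      case (single u' c')
      show ?case
      proof (induction b rule: poly_mapping_induct_single)
        case (single v d)
        show ?case
        proof (induction b' rule: poly_mapping_induct_single)
          case (single v' d')
          then show ?case by (simp add: mult_single monomial hom mult_ac)
        qed (simp_all add: zero distrib_left add_right)
      qed (simp_all add: zero distrib_left distrib_right add_left add_right)
    qed (simp_all add: zero distrib_right distrib_left add_left add_right)
  qed (simp_all add: zero distrib_right add_left)
qed

lemma tens_mult: "tens (a * a') (b * b') = tens a b * tens a' b'"
  by (rule bilinear_monomial_mult[where \<phi>="\<lambda>u v. (u, v)"]) (simp_all add: tens_add_left tens_add_right tens_single)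
lemma tens21_mult: "tens21 (a * a') (b * b') = tens21 a b * tens21 a' b'"
  by (rule bilinear_monomial_mult[where \<phi>="\<lambda>p w. (fst p, snd p, w)"]) (auto simp: tens21_add_left tens21_add_right tens21_single)
lemma tens12_mult: "tens12 (a * a') (b * b') = tens12 a b * tens12 a' b'"
  by (rule bilinear_monomial_mult[where \<phi>="\<lambda>u p. (u, fst p, snd p)"]) (auto simp: tens12_add_left tens12_add_right tens12_single)

lemma tens_one: "tens 1 1 = 1"
  using tens_single[of 0 1 0 1] by (simp add: zero_prod_def[symmetric])
lemma tens21_one: "tens21 1 1 = 1"
  using tens21_single[of 0 0 1 0 1] by (simp add: zero_prod_def[symmetric])
lemma tens12_one: "tens12 1 1 = 1"
  using tens12_single[of 0 1 0 0 1] by (simp add: zero_prod_def[symmetric])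

lemma tens_mono: "tens (mono u) (mono v) = mono (u, v)"
  by (simp add: mono_def tens_single)

lemma lookup_one_pair: "Poly_Mapping.lookup (1::F2) (u, v) = Poly_Mapping.lookup (1::F) u * Poly_Mapping.lookup (1::F) v"
  by (metis tens_one lookup_tens)

lemma tlift_eq_lin_ext:
  "tlift h z = lin_ext (\<lambda>c. Poly_Mapping.single 0 c) (\<lambda>p. h (mono (fst p)) (mono (snd p))) z"
  by (simp add: tlift_def lin_ext_def smul_def)

lemma tlift_add: "tlift h (z + w) = tlift h z + tlift h w"
  by (simp add: tlift_eq_lin_ext constant_scalars.lin_ext_add)
lemma tlift_zero: "tlift h 0 = 0"
  by (simp add: tlift_eq_lin_ext)
lemma tlift_smul: "tlift h (smul c z) = smul c (tlift h z)"
  unfolding tlift_eq_lin_ext by (subst constant_scalars.lin_ext_smul) (simp add: smul_def)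
lemma tlift_single: "tlift h (Poly_Mapping.single p c) = smul c (h (mono (fst p)) (mono (snd p)))"
  by (simp add: tlift_eq_lin_ext smul_def)
lemma tlift_tens_mono: "tlift h (tens (mono u) (mono v)) = h (mono u) (mono v)"
  by (simp add: tens_mono) (simp add: mono_def tlift_single)
lemma tlift_one: "tlift h 1 = h 1 1"
  using tlift_tens_mono[of h 0 0] by (simp add: tens_one)
lemma tlift_mult:
  assumes "\<And>u v u' v'. h (mono (u + u')) (mono (v + v')) = h (mono u) (mono v) * h (mono u') (mono v')"
  shows "tlift h (z * w) = tlift h z * tlift h w"
  unfolding tlift_eq_lin_ext by (rule constant_scalars.lin_ext_mult) (simp add: assms)

section \<open>The free algebra\<close>

primrec word_prod :: "(gen \<Rightarrow> 'b::monoid_mult) \<Rightarrow> gen word \<Rightarrow> 'b" where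
  "word_prod \<phi> (Word l) = prod_list (map \<phi> l)"

primrec word_prod_rev :: "(gen \<Rightarrow> 'b::monoid_mult) \<Rightarrow> gen word \<Rightarrow> 'b" where
  "word_prod_rev \<phi> (Word l) = prod_list (rev (map \<phi> l))"

lemma word_prod_add: "word_prod \<phi> (u + v) = word_prod \<phi> u * word_prod \<phi> v"
  by (cases u; cases v) simp

lemma word_prod_rev_add: "word_prod_rev \<phi> (u + v) = word_prod_rev \<phi> v * word_prod_rev \<phi> u"
  by (cases u; cases v) simp

lemma word_prod_zero: "word_prod \<phi> 0 = 1"
  by (simp add: zero_word_def)

lemma word_prod_rev_zero: "word_prod_rev \<phi> 0 = 1"
  by (simp add: zero_word_def)

primrec Delta_gen :: "gen \<Rightarrow> F2" where
  "Delta_gen (B s i) = tens (Bg s i) 1 + tens (Kg s) (Bg s i)"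
| "Delta_gen (K s) = tens (Kg s) (Kg s)"

primrec antipode_gen :: "gen \<Rightarrow> F" where
  "antipode_gen (B s i) = Bg s i * Kg (sneg s)"
| "antipode_gen (K s) = Kg (sneg s)"

primrec counit_gen :: "gen \<Rightarrow> complex" where
  "counit_gen (B s i) = 0"
| "counit_gen (K s) = 1"

definition Delta_F :: "F \<Rightarrow> F2" where
  "Delta_F = lin_ext (\<lambda>c. Poly_Mapping.single 0 c) (word_prod Delta_gen)"

definition antipode_F :: "F \<Rightarrow> F" where
  "antipode_F = lin_ext (\<lambda>c. Poly_Mapping.single 0 c) (word_prod_rev antipode_gen)"

definition counit_F :: "F \<Rightarrow> complex" where
  "counit_F = lin_ext (\<lambda>c. c) (word_prod counit_gen)"

lemma Delta_F_add: "Delta_F (x + y) = Delta_F x + Delta_F y"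
  by (simp add: Delta_F_def constant_scalars.lin_ext_add)
lemma Delta_F_diff: "Delta_F (x - y) = Delta_F x - Delta_F y"
  by (simp add: Delta_F_def constant_scalars.lin_ext_diff)
lemma Delta_F_mult: "Delta_F (x * y) = Delta_F x * Delta_F y"
  by (simp add: Delta_F_def constant_scalars.lin_ext_mult word_prod_add)
lemma Delta_F_smul: "Delta_F (smul c x) = smul c (Delta_F x)"
  unfolding Delta_F_def by (subst constant_scalars.lin_ext_smul) (simp add: smul_def)
lemma Delta_F_one: "Delta_F 1 = 1"
  by (simp add: Delta_F_def constant_scalars.lin_ext_one word_prod_zero)

lemma antipode_F_add: "antipode_F (x + y) = antipode_F x + antipode_F y"
  by (simp add: antipode_F_def constant_scalars.lin_ext_add)
lemma antipode_F_diff: "antipode_F (x - y) = antipode_F x - antipode_F y"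
  by (simp add: antipode_F_def constant_scalars.lin_ext_diff)
lemma antipode_F_mult: "antipode_F (x * y) = antipode_F y * antipode_F x"
  by (simp add: antipode_F_def constant_scalars.lin_ext_antimult word_prod_rev_add)
lemma antipode_F_smul: "antipode_F (smul c x) = smul c (antipode_F x)"
  unfolding antipode_F_def by (subst constant_scalars.lin_ext_smul) (simp add: smul_def)
lemma antipode_F_one: "antipode_F 1 = 1"
  by (simp add: antipode_F_def constant_scalars.lin_ext_one word_prod_rev_zero)

lemma counit_F_add: "counit_F (x + y) = counit_F x + counit_F y"
  by (simp add: counit_F_def complex_scalars.lin_ext_add)
lemma counit_F_diff: "counit_F (x - y) = counit_F x - counit_F y"
  by (simp add: counit_F_def complex_scalars.lin_ext_diff)
lemma counit_F_mult: "counit_F (x * y) = counit_F x * counit_F y"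
  by (simp add: counit_F_def complex_scalars.lin_ext_mult word_prod_add)
lemma counit_F_smul: "counit_F (smul c x) = c * counit_F x"
  by (simp add: counit_F_def complex_scalars.lin_ext_smul)
lemma counit_F_one: "counit_F 1 = 1"
  by (simp add: counit_F_def complex_scalars.lin_ext_one word_prod_zero)

lemma Delta_F_Bg: "Delta_F (Bg s i) = tens (Bg s i) 1 + tens (Kg s) (Bg s i)"
  by (simp add: Delta_F_def Bg_def X_def mono_def)
lemma Delta_F_Kg: "Delta_F (Kg s) = tens (Kg s) (Kg s)"
  by (simp add: Delta_F_def Kg_def X_def mono_def)
lemma antipode_F_Bg: "antipode_F (Bg s i) = Bg s i * Kg (sneg s)"
  by (simp add: antipode_F_def Bg_def Kg_def X_def mono_def)
lemma antipode_F_Kg: "antipode_F (Kg s) = Kg (sneg s)"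
  by (simp add: antipode_F_def Kg_def X_def mono_def)
lemma counit_F_Bg: "counit_F (Bg s i) = 0"
  by (simp add: counit_F_def Bg_def X_def mono_def)
lemma counit_F_Kg: "counit_F (Kg s) = 1"
  by (simp add: counit_F_def Kg_def X_def mono_def)

lemma free_alg_induct [case_names one gen add smul mult]:
  fixes P :: "F \<Rightarrow> bool"
  assumes one: "P 1" and gen: "\<And>g. P (X g)" and add: "\<And>x y. P x \<Longrightarrow> P y \<Longrightarrow> P (x + y)"
    and smul: "\<And>c x. P x \<Longrightarrow> P (smul c x)" and mult: "\<And>x y. P x \<Longrightarrow> P y \<Longrightarrow> P (x * y)"
  shows "P x"
proof -
  have mono: "P (mono (Word l))" for l
  proof (induction l)
    case Nil then show ?case using one by (simp add: zero_word_def[symmetric])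
  next
    case (Cons g l)
    have "mono (Word (g # l)) = X g * mono (Word l)"
      by (simp add: X_def mono_add[symmetric])
    then show ?case using Cons gen mult by simp
  qed
  have single: "P (Poly_Mapping.single w c)" for w c
  proof -
    have "Poly_Mapping.single w c = smul c (mono w)" by (simp add: mono_def smul_single)
    then show ?thesis using mono smul by (cases w) simp
  qed
  show ?thesis
    by (induction x rule: poly_mapping_induct_single) (use single[of 0 0] single add in simp_all)
qed

lemma free_hom_eqI:
  fixes A B :: "F \<Rightarrow> ('l::monoid_add \<Rightarrow>\<^sub>0 complex)"
  assumes "\<And>x y. A (x + y) = A x + A y" "\<And>c x. A (smul c x) = smul c (A x)"
    "\<And>x y. A (x * y) = A x * A y" "A 1 = 1"
    and "\<And>x y. B (x + y) = B x + B y" "\<And>c x. B (smul c x) = smul c (B x)"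
    "\<And>x y. B (x * y) = B x * B y" "B 1 = 1"
    and "\<And>g. A (X g) = B (X g)"
  shows "A x = B x"
  by (induction x rule: free_alg_induct) (simp_all add: assms)

text \<open>The multiplication law m is either the product or the reversed product, so that
  homomorphisms and anti-homomorphisms are covered at once.\<close>

lemma free_map_unique_mod:
  fixes D' D :: "F \<Rightarrow> 'b::ring_1" and m :: "'b \<Rightarrow> 'b \<Rightarrow> 'b"
  assumes D'_add: "\<And>x y. D' (x + y) - (D' x + D' y) \<in> ideal_gen R"
    and D'_smul: "\<And>c x. D' (smul c x) - sm c (D' x) \<in> ideal_gen R"
    and D'_mult: "\<And>x y. D' (x * y) - m (D' x) (D' y) \<in> ideal_gen R"
    and D'_one: "D' 1 - 1 \<in> ideal_gen R"
    and D_add: "\<And>x y. D (x + y) = D x + D y" and D_smul: "\<And>c x. D (smul c x) = sm c (D x)"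
    and D_mult: "\<And>x y. D (x * y) = m (D x) (D y)" and D_one: "D 1 = 1"
    and sm_cong: "\<And>c a a'. a - a' \<in> ideal_gen R \<Longrightarrow> sm c a - sm c a' \<in> ideal_gen R"
    and m_cong: "\<And>a a' b b'. a - a' \<in> ideal_gen R \<Longrightarrow> b - b' \<in> ideal_gen R \<Longrightarrow> m a b - m a' b' \<in> ideal_gen R"
    and generators: "\<And>g. D' (X g) - D (X g) \<in> ideal_gen R"
  shows "D' x - D x \<in> ideal_gen R"
proof (induction x rule: free_alg_induct)
  case one then show ?case using D'_one D_one by simp
next
  case (gen g) then show ?case by (rule generators)
next
  case (add x y)
  show ?case using ideal_gen_cong_trans[OF D'_add ideal_gen_cong_add[OF add]] by (simp add: D_add)
next
  case (smul c x)
  show ?case using ideal_gen_cong_trans[OF D'_smul sm_cong[OF smul]] by (simp add: D_smul)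
next
  case (mult x y)
  show ?case using ideal_gen_cong_trans[OF D'_mult m_cong[OF mult]] by (simp add: D_mult)
qed

lemma alg_hom_mod_unique:
  fixes D' D :: "F \<Rightarrow> ('l::monoid_add \<Rightarrow>\<^sub>0 complex)"
  assumes "alg_hom_mod I1 (ideal_gen R) D'"
    and "\<And>x y. D (x + y) = D x + D y" "\<And>c x. D (smul c x) = smul c (D x)"
    "\<And>x y. D (x * y) = D x * D y" "D 1 = 1"
    and "\<And>g. D' (X g) - D (X g) \<in> ideal_gen R"
  shows "D' x - D x \<in> ideal_gen R"
  by (rule free_map_unique_mod[where sm=smul and m="(*)"])
    (use assms in \<open>simp_all add: alg_hom_mod_def ideal_gen_cong_smul ideal_gen_cong_mult\<close>)

lemma alg_antihom_mod_unique:
  fixes D' D :: "F \<Rightarrow> ('l::monoid_add \<Rightarrow>\<^sub>0 complex)"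
  assumes "alg_antihom_mod I1 (ideal_gen R) D'"
    and "\<And>x y. D (x + y) = D x + D y" "\<And>c x. D (smul c x) = smul c (D x)"
    "\<And>x y. D (x * y) = D y * D x" "D 1 = 1"
    and "\<And>g. D' (X g) - D (X g) \<in> ideal_gen R"
  shows "D' x - D x \<in> ideal_gen R"
  by (rule free_map_unique_mod[where sm=smul and m="\<lambda>a b. b * a"])
    (use assms in \<open>simp_all add: alg_antihom_mod_def ideal_gen_cong_smul ideal_gen_cong_mult\<close>)

lemma char_mod_unique:
  assumes "char_mod I1 e" and "\<And>g. e (X g) = counit_F (X g)"
  shows "e x = counit_F x"
  using assms unfolding char_mod_def
  by (induction x rule: free_alg_induct) (simp_all add: counit_F_one counit_F_add counit_F_smul counit_F_mult)

section \<open>The defining relations\<close>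

text \<open>rel_coeff ep eta j l is the coefficient (ep - eta) delta(j,l) of the defining relations, written
  without numerals so that it makes sense in any ring.\<close>

definition rel_coeff :: "sgn \<Rightarrow> sgn \<Rightarrow> nat \<Rightarrow> nat \<Rightarrow> 'a::{ring,monoid_mult}" where
  "rel_coeff ep eta j l = (if j = l \<and> ep \<noteq> eta then (if ep = Pl then 1 + 1 else - (1 + 1)) else 0)"

lemma rel_coeff_commute: "rel_coeff ep eta j l * x = x * (rel_coeff ep eta j l :: 'a::{ring,monoid_mult})"
  by (cases "j = l \<and> ep \<noteq> eta"; cases ep) (simp_all add: rel_coeff_def algebra_simps)

lemma smul_rel_coeff:
  "smul ((sval ep - sval eta) * (if j = l then 1 else 0)) x = rel_coeff ep eta j l * (x :: 'k::monoid_add \<Rightarrow>\<^sub>0 complex)"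
proof -
  have "(sval ep - sval eta) * (if j = l then 1 else 0) =
      (if j = l \<and> ep \<noteq> eta then (if ep = Pl then 1 + 1 else - (1 + 1)) else 0)"
    by (cases ep; cases eta) auto
  then show ?thesis
    unfolding smul_def rel_coeff_def
    by (simp only: if_distrib[of "Poly_Mapping.single 0"] single_add single_uminus single_one single_zero)
qed

definition pbk_relations :: "(sgn \<Rightarrow> nat \<Rightarrow> 'a::{ring,monoid_mult}) \<Rightarrow> (sgn \<Rightarrow> 'a) \<Rightarrow> bool" where
  "pbk_relations b k \<longleftrightarrow>
     (\<forall>xi eta ep i j l. comm (acomm (b xi i) (b eta j)) (b ep l)
        = rel_coeff ep eta j l * b xi i + rel_coeff ep xi i l * b eta j) \<and>
     k Pl * k Mi = 1 \<and> k Mi * k Pl = 1 \<and> (\<forall>s t i. acomm (k s) (b t i) = 0)"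

text \<open>The defining relations read in the opposite algebra: only the commutator changes.\<close>

definition pbk_relations_op :: "(sgn \<Rightarrow> nat \<Rightarrow> 'a::{ring,monoid_mult}) \<Rightarrow> (sgn \<Rightarrow> 'a) \<Rightarrow> bool" where
  "pbk_relations_op b k \<longleftrightarrow>
     (\<forall>xi eta ep i j l. comm (b ep l) (acomm (b xi i) (b eta j))
        = rel_coeff ep eta j l * b xi i + rel_coeff ep xi i l * b eta j) \<and>
     k Pl * k Mi = 1 \<and> k Mi * k Pl = 1 \<and> (\<forall>s t i. acomm (k s) (b t i) = 0)"

lemma acomm_eq_0_iff: "acomm a b = 0 \<longleftrightarrow> b * a = - (a * (b::'a::ring))"
  by (simp add: acomm_def eq_neg_iff_add_eq_0 add.commute)

lemma mult_assoc_rule: "x * y = w \<Longrightarrow> x * (y * z) = w * (z::'a::{ring,monoid_mult})"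
  by (simp add: mult.assoc[symmetric])

lemma pbk_relationsD:
  assumes "pbk_relations b k"
  shows "comm (acomm (b xi i) (b eta j)) (b ep l) = rel_coeff ep eta j l * b xi i + rel_coeff ep xi i l * b eta j"
    and "k Pl * k Mi = 1" and "k Mi * k Pl = 1" and "b t i * k s = - (k s * b t i)"
  using assms by (simp_all add: pbk_relations_def flip: acomm_eq_0_iff)

lemma pbk_relations_tensor:
  fixes b b' :: "sgn \<Rightarrow> nat \<Rightarrow> 'a::{ring,monoid_mult}" and k k' :: "sgn \<Rightarrow> 'a"
  assumes rels: "pbk_relations b k" and rels': "pbk_relations b' k'"
    and c1: "\<And>s i t j. b' t j * b s i = b s i * b' t j"
    and c2: "\<And>s i t. k' t * b s i = b s i * k' t"
    and c3: "\<And>s t i. b' t i * k s = k s * b' t i"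
    and c4: "\<And>s t. k' t * k s = k s * k' t"
  shows "pbk_relations (\<lambda>s i. b s i + k s * b' s i) (\<lambda>s. k s * k' s)"
proof -
  note r1 = pbk_relationsD(1)[OF rels] and r2 = pbk_relationsD(2)[OF rels]
    and r3 = pbk_relationsD(3)[OF rels] and r4 = pbk_relationsD(4)[OF rels]
  note r1' = pbk_relationsD(1)[OF rels'] and r2' = pbk_relationsD(2)[OF rels']
    and r3' = pbk_relationsD(3)[OF rels'] and r4' = pbk_relationsD(4)[OF rels']
  note R = r2 r3 r4 c1 c2 c3 c4 r2' r3' r4'
    mult_assoc_rule[OF r2] mult_assoc_rule[OF r3] mult_assoc_rule[OF r4] mult_assoc_rule[OF c1]
    mult_assoc_rule[OF c2] mult_assoc_rule[OF c3] mult_assoc_rule[OF c4] mult_assoc_rule[OF r2']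
    mult_assoc_rule[OF r3'] mult_assoc_rule[OF r4']
  have kc: "k s * k t = k t * k s" for s t by (cases s; cases t) (simp_all add: r2 r3)
  have coproduct_rel:
    "comm (acomm (b xi i + k xi * b' xi i) (b eta j + k eta * b' eta j)) (b ep l + k ep * b' ep l)
     = rel_coeff ep eta j l * (b xi i + k xi * b' xi i) + rel_coeff ep xi i l * (b eta j + k eta * b' eta j)"
    for xi eta ep i j l
  proof -
    define Y where "Y = acomm (b xi i) (b eta j)"
    define Y' where "Y' = acomm (b' xi i) (b' eta j)"
    have "acomm (b xi i + k xi * b' xi i) (b eta j + k eta * b' eta j) = Y + k xi * (k eta * Y')"
      unfolding Y_def Y'_def acomm_def
      by (simp add: algebra_simps R mult_assoc_rule[OF kc[of eta xi]])
    then have "comm (acomm (b xi i + k xi * b' xi i) (b eta j + k eta * b' eta j)) (b ep l + k ep * b' ep l)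
        = comm Y (b ep l) + k xi * (k eta * (k ep * comm Y' (b' ep l)))"
      unfolding Y_def Y'_def acomm_def comm_def
      by (simp add: algebra_simps R mult_assoc_rule[OF kc[of ep xi]] mult_assoc_rule[OF kc[of ep eta]]
          kc[of ep xi] kc[of ep eta])
    also have "\<dots> = rel_coeff ep eta j l * b xi i + rel_coeff ep xi i l * b eta j
        + k xi * (k eta * (k ep * (rel_coeff ep eta j l * b' xi i + rel_coeff ep xi i l * b' eta j)))"
      by (simp add: Y_def Y'_def r1 r1')
    also have "\<dots> = rel_coeff ep eta j l * (b xi i + k xi * b' xi i) + rel_coeff ep xi i l * (b eta j + k eta * b' eta j)"
      by (cases xi; cases eta; cases ep) (auto simp: rel_coeff_def algebra_simps R)
    finally show ?thesis .
  qed
  have "(k Pl * k' Pl) * (k Mi * k' Mi) = 1" "(k Mi * k' Mi) * (k Pl * k' Pl) = 1"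
    by (simp_all add: algebra_simps R)
  moreover have "acomm (k s * k' s) (b t i + k t * b' t i) = 0" for s t i
    by (cases s; cases t) (simp_all add: acomm_def algebra_simps R)
  ultimately show ?thesis
    using coproduct_rel by (simp add: pbk_relations_def)
qed

lemma pbk_relations_antipode:
  fixes b :: "sgn \<Rightarrow> nat \<Rightarrow> 'a::{ring,monoid_mult}" and k :: "sgn \<Rightarrow> 'a"
  assumes rels: "pbk_relations b k"
  shows "pbk_relations_op (\<lambda>s i. b s i * k (sneg s)) (\<lambda>s. k (sneg s))"
proof -
  note r1 = pbk_relationsD(1)[OF rels] and r2 = pbk_relationsD(2)[OF rels]
    and r3 = pbk_relationsD(3)[OF rels] and r4 = pbk_relationsD(4)[OF rels]
  note R = r2 r3 r4 mult_assoc_rule[OF r2] mult_assoc_rule[OF r3] mult_assoc_rule[OF r4]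
  have antipode_rel:
    "comm (b ep l * k (sneg ep)) (acomm (b xi i * k (sneg xi)) (b eta j * k (sneg eta)))
     = rel_coeff ep eta j l * (b xi i * k (sneg xi)) + rel_coeff ep xi i l * (b eta j * k (sneg eta))"
    for xi eta ep i j l
  proof -
    have "comm (b ep l * k (sneg ep)) (acomm (b xi i * k (sneg xi)) (b eta j * k (sneg eta)))
       = - (k (sneg xi) * (k (sneg eta) * (k (sneg ep) * comm (acomm (b xi i) (b eta j)) (b ep l))))"
      by (cases xi; cases eta; cases ep) (simp_all add: comm_def acomm_def algebra_simps R)
    also have "\<dots> = - (k (sneg xi) * (k (sneg eta) * (k (sneg ep)
        * (rel_coeff ep eta j l * b xi i + rel_coeff ep xi i l * b eta j))))"
      by (simp add: r1)
    also have "\<dots> = rel_coeff ep eta j l * (b xi i * k (sneg xi)) + rel_coeff ep xi i l * (b eta j * k (sneg eta))"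
      by (cases xi; cases eta; cases ep) (auto simp: rel_coeff_def algebra_simps R)
    finally show ?thesis .
  qed
  have "acomm (k (sneg s)) (b t i * k (sneg t)) = 0" for s t i
    by (cases s; cases t) (simp_all add: acomm_def algebra_simps R)
  then show ?thesis
    using antipode_rel r2 r3 by (simp add: pbk_relations_op_def)
qed

lemma Rel_members:
  "comm (acomm (Bg xi i) (Bg eta j)) (Bg ep l)
     - (rel_coeff ep eta j l * Bg xi i + rel_coeff ep xi i l * Bg eta j) \<in> Rel"
  "Kg s * Kg (sneg s) - 1 \<in> Rel"
  "acomm (Kg s) (Bg t i) \<in> Rel"
proof -
  show "comm (acomm (Bg xi i) (Bg eta j)) (Bg ep l)
     - (rel_coeff ep eta j l * Bg xi i + rel_coeff ep xi i l * Bg eta j) \<in> Rel"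
    unfolding Rel_def smul_rel_coeff[symmetric] by blast
  show "Kg s * Kg (sneg s) - 1 \<in> Rel"
    by (cases s) (simp_all add: Rel_def)
  show "acomm (Kg s) (Bg t i) \<in> Rel"
    unfolding Rel_def by blast
qed

locale free_hom =
  fixes \<phi> :: "F \<Rightarrow> 'a::{ring,monoid_mult}"
  assumes hom_add: "\<phi> (x + y) = \<phi> x + \<phi> y"
    and hom_mult: "\<phi> (x * y) = \<phi> x * \<phi> y"
    and hom_one: "\<phi> 1 = 1"
begin

lemma hom_zero: "\<phi> 0 = 0"
  using hom_add[of 0 0] by simp

lemma hom_diff: "\<phi> (x - y) = \<phi> x - \<phi> y"
  using hom_add[of "x - y" y] by (simp add: algebra_simps)

lemma hom_uminus: "\<phi> (- x) = - \<phi> x"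
  using hom_diff[of 0 x] by (simp add: hom_zero)

lemma hom_comm: "\<phi> (comm x y) = comm (\<phi> x) (\<phi> y)"
  by (simp add: comm_def hom_diff hom_mult)

lemma hom_acomm: "\<phi> (acomm x y) = acomm (\<phi> x) (\<phi> y)"
  by (simp add: acomm_def hom_add hom_mult)

lemma hom_rel_coeff: "\<phi> (rel_coeff ep eta j l) = rel_coeff ep eta j l"
  by (simp only: rel_coeff_def if_distrib[of \<phi>] hom_zero hom_one hom_add hom_uminus)

lemma Rel_vanish_iff: "(\<forall>r\<in>Rel. \<phi> r = 0) \<longleftrightarrow> pbk_relations (\<lambda>s i. \<phi> (Bg s i)) (\<lambda>s. \<phi> (Kg s))"
proof
  assume vanish: "\<forall>r\<in>Rel. \<phi> r = 0"
  have "\<phi> (comm (acomm (Bg xi i) (Bg eta j)) (Bg ep l)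
      - (rel_coeff ep eta j l * Bg xi i + rel_coeff ep xi i l * Bg eta j)) = 0"
    and "\<phi> (Kg s * Kg (sneg s) - 1) = 0" and "\<phi> (acomm (Kg s) (Bg t i)) = 0"
    for xi eta ep i j l s t
    using vanish Rel_members by blast+
  then have "comm (acomm (\<phi> (Bg xi i)) (\<phi> (Bg eta j))) (\<phi> (Bg ep l))
      = rel_coeff ep eta j l * \<phi> (Bg xi i) + rel_coeff ep xi i l * \<phi> (Bg eta j)"
    and "\<phi> (Kg s) * \<phi> (Kg (sneg s)) = 1" and "acomm (\<phi> (Kg s)) (\<phi> (Bg t i)) = 0"
    for xi eta ep i j l s t
    by (simp_all only: hom_diff hom_add hom_mult hom_comm hom_acomm hom_rel_coeff hom_one right_minus_eq)
  then show "pbk_relations (\<lambda>s i. \<phi> (Bg s i)) (\<lambda>s. \<phi> (Kg s))"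
    unfolding pbk_relations_def using sneg.simps by metis
next
  assume "pbk_relations (\<lambda>s i. \<phi> (Bg s i)) (\<lambda>s. \<phi> (Kg s))"
  then show "\<forall>r\<in>Rel. \<phi> r = 0"
    unfolding Rel_def pbk_relations_def
    by (auto simp: hom_diff hom_add hom_mult hom_one hom_comm hom_acomm smul_rel_coeff hom_rel_coeff)
qed

end

locale free_antihom =
  fixes \<phi> :: "F \<Rightarrow> 'a::{ring,monoid_mult}"
  assumes antihom_add: "\<phi> (x + y) = \<phi> x + \<phi> y"
    and antihom_mult: "\<phi> (x * y) = \<phi> y * \<phi> x"
    and antihom_one: "\<phi> 1 = 1"
begin

lemma antihom_zero: "\<phi> 0 = 0"
  using antihom_add[of 0 0] by simp

lemma antihom_diff: "\<phi> (x - y) = \<phi> x - \<phi> y"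
  using antihom_add[of "x - y" y] by (simp add: algebra_simps)

lemma antihom_uminus: "\<phi> (- x) = - \<phi> x"
  using antihom_diff[of 0 x] by (simp add: antihom_zero)

lemma antihom_rel_coeff: "\<phi> (rel_coeff ep eta j l) = rel_coeff ep eta j l"
  by (simp only: rel_coeff_def if_distrib[of \<phi>] antihom_zero antihom_one antihom_add antihom_uminus)

lemma Rel_vanish: "pbk_relations_op (\<lambda>s i. \<phi> (Bg s i)) (\<lambda>s. \<phi> (Kg s)) \<Longrightarrow> r \<in> Rel \<Longrightarrow> \<phi> r = 0"
  by (auto simp: Rel_def pbk_relations_op_def comm_def acomm_def antihom_diff antihom_add antihom_mult
      antihom_one smul_rel_coeff antihom_rel_coeff rel_coeff_commute add.commute)

end

section \<open>Descent to the quotient\<close>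

lemma I1_zero [simp]: "0 \<in> I1"
  by (simp add: I1_def ideal_gen.zero)

lemma I2_zero [simp]: "0 \<in> I2"
  by (simp add: I2_def ideal_gen.zero)

text \<open>P and P \<otimes> P as types; they only serve as rings in which the relations can be evaluated.\<close>

quotient_type P1 = F / "\<lambda>x y. x - y \<in> I1"
proof (rule equivpI)
  show "reflp (\<lambda>x y. x - y \<in> I1)" by (rule reflpI) simp
  show "symp (\<lambda>x y. x - y \<in> I1)" unfolding I1_def by (rule sympI) (rule ideal_gen_cong_sym)
  show "transp (\<lambda>x y. x - y \<in> I1)" unfolding I1_def by (rule transpI) (rule ideal_gen_cong_trans)
qed

instantiation P1 :: "{ring, monoid_mult}"
begin
lift_definition zero_P1 :: P1 is "0" .
lift_definition one_P1 :: P1 is "1" .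
lift_definition plus_P1 :: "P1 \<Rightarrow> P1 \<Rightarrow> P1" is "(+)"
  unfolding I1_def by (rule ideal_gen_cong_add)
lift_definition uminus_P1 :: "P1 \<Rightarrow> P1" is "uminus"
  unfolding I1_def by (rule ideal_gen_cong_uminus)
lift_definition minus_P1 :: "P1 \<Rightarrow> P1 \<Rightarrow> P1" is "(-)"
  unfolding I1_def by (rule ideal_gen_cong_diff)
lift_definition times_P1 :: "P1 \<Rightarrow> P1 \<Rightarrow> P1" is "(*)"
  unfolding I1_def by (rule ideal_gen_cong_mult)
instance
  apply intro_classes
  apply (transfer; simp add: algebra_simps; fail)+
  done
end

lemma abs_P1_eq_0_iff: "abs_P1 x = 0 \<longleftrightarrow> x \<in> I1"
  by (metis P1.abs_eq_iff diff_zero zero_P1.abs_eq)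

interpretation P1_quotient: free_hom abs_P1
  by unfold_locales (simp_all add: plus_P1.abs_eq times_P1.abs_eq one_P1.abs_eq)

quotient_type P2 = F2 / "\<lambda>x y. x - y \<in> I2"
proof (rule equivpI)
  show "reflp (\<lambda>x y. x - y \<in> I2)" by (rule reflpI) simp
  show "symp (\<lambda>x y. x - y \<in> I2)" unfolding I2_def by (rule sympI) (rule ideal_gen_cong_sym)
  show "transp (\<lambda>x y. x - y \<in> I2)" unfolding I2_def by (rule transpI) (rule ideal_gen_cong_trans)
qed

instantiation P2 :: "{ring, monoid_mult}"
begin
lift_definition zero_P2 :: P2 is "0" .
lift_definition one_P2 :: P2 is "1" .
lift_definition plus_P2 :: "P2 \<Rightarrow> P2 \<Rightarrow> P2" is "(+)"
  unfolding I2_def by (rule ideal_gen_cong_add)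
lift_definition uminus_P2 :: "P2 \<Rightarrow> P2" is "uminus"
  unfolding I2_def by (rule ideal_gen_cong_uminus)
lift_definition minus_P2 :: "P2 \<Rightarrow> P2 \<Rightarrow> P2" is "(-)"
  unfolding I2_def by (rule ideal_gen_cong_diff)
lift_definition times_P2 :: "P2 \<Rightarrow> P2 \<Rightarrow> P2" is "(*)"
  unfolding I2_def by (rule ideal_gen_cong_mult)
instance
  apply intro_classes
  apply (transfer; simp add: algebra_simps; fail)+
  done
end

lemma abs_P2_eq_0_iff: "abs_P2 x = 0 \<longleftrightarrow> x \<in> I2"
  by (metis P2.abs_eq_iff diff_zero zero_P2.abs_eq)

lemma abs_P2_add: "abs_P2 (x + y) = abs_P2 x + abs_P2 y"
  by (simp add: plus_P2.abs_eq)

lemma abs_P2_mult: "abs_P2 (x * y) = abs_P2 x * abs_P2 y"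
  by (simp add: times_P2.abs_eq)

lemma pbk_relations_P1: "pbk_relations (\<lambda>s i. abs_P1 (Bg s i)) (\<lambda>s. abs_P1 (Kg s))"
  by (simp flip: P1_quotient.Rel_vanish_iff add: abs_P1_eq_0_iff I1_def ideal_gen.gen)

definition left_leg :: "F \<Rightarrow> P2" where "left_leg x = abs_P2 (tens x 1)"
definition right_leg :: "F \<Rightarrow> P2" where "right_leg x = abs_P2 (tens 1 x)"

interpretation left_leg: free_hom left_leg
  by unfold_locales (simp_all add: left_leg_def tens_add_left abs_P2_add tens_one one_P2.abs_eq
      flip: abs_P2_mult tens_mult)

interpretation right_leg: free_hom right_leg
  by unfold_locales (simp_all add: right_leg_def tens_add_right abs_P2_add tens_one one_P2.abs_eq
      flip: abs_P2_mult tens_mult)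

lemma abs_P2_tens: "abs_P2 (tens x y) = left_leg x * right_leg y"
  using tens_mult[of x 1 1 y] by (simp add: left_leg_def right_leg_def abs_P2_mult)

lemma legs_commute: "right_leg y * left_leg x = left_leg x * right_leg y"
proof -
  have "right_leg y * left_leg x = abs_P2 (tens x y)"
    using tens_mult[of 1 x y 1] by (simp add: left_leg_def right_leg_def abs_P2_mult)
  then show ?thesis by (simp add: abs_P2_tens)
qed

lemma pbk_relations_left_leg: "pbk_relations (\<lambda>s i. left_leg (Bg s i)) (\<lambda>s. left_leg (Kg s))"
  unfolding left_leg.Rel_vanish_iff[symmetric]
  by (auto simp: left_leg_def abs_P2_eq_0_iff I2_def intro: ideal_gen.gen)

lemma pbk_relations_right_leg: "pbk_relations (\<lambda>s i. right_leg (Bg s i)) (\<lambda>s. right_leg (Kg s))"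
  unfolding right_leg.Rel_vanish_iff[symmetric]
  by (auto simp: right_leg_def abs_P2_eq_0_iff I2_def intro: ideal_gen.gen)

interpretation Delta_P2: free_hom "\<lambda>x. abs_P2 (Delta_F x)"
  by unfold_locales (simp_all add: Delta_F_add Delta_F_mult Delta_F_one abs_P2_add abs_P2_mult one_P2.abs_eq)

interpretation antipode_P1: free_antihom "\<lambda>x. abs_P1 (antipode_F x)"
  by unfold_locales (simp_all add: antipode_F_add antipode_F_mult antipode_F_one P1_quotient.hom_add
      P1_quotient.hom_mult P1_quotient.hom_one)

interpretation counit_F: free_hom counit_F
  by unfold_locales (simp_all add: counit_F_add counit_F_mult counit_F_one)

lemma Delta_F_Rel: "r \<in> Rel \<Longrightarrow> Delta_F r \<in> I2"
proof -
  assume "r \<in> Rel"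
  have "pbk_relations (\<lambda>s i. left_leg (Bg s i) + left_leg (Kg s) * right_leg (Bg s i))
      (\<lambda>s. left_leg (Kg s) * right_leg (Kg s))"
    by (rule pbk_relations_tensor[OF pbk_relations_left_leg pbk_relations_right_leg]) (simp_all add: legs_commute)
  then have "pbk_relations (\<lambda>s i. abs_P2 (Delta_F (Bg s i))) (\<lambda>s. abs_P2 (Delta_F (Kg s)))"
    by (simp add: Delta_F_Bg Delta_F_Kg abs_P2_add abs_P2_tens right_leg.hom_one)
  with \<open>r \<in> Rel\<close> show ?thesis
    by (simp flip: Delta_P2.Rel_vanish_iff add: abs_P2_eq_0_iff)
qed

lemma antipode_F_Rel: "r \<in> Rel \<Longrightarrow> antipode_F r \<in> I1"
  using antipode_P1.Rel_vanish pbk_relations_antipode[OF pbk_relations_P1]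
  by (simp add: antipode_F_Bg antipode_F_Kg P1_quotient.hom_mult flip: abs_P1_eq_0_iff)

lemma counit_F_Rel: "r \<in> Rel \<Longrightarrow> counit_F r = 0"
  using counit_F.Rel_vanish_iff
  by (simp add: pbk_relations_def counit_F_Bg counit_F_Kg comm_def acomm_def)

lemma Delta_F_I1: "x \<in> I1 \<Longrightarrow> Delta_F x \<in> I2"
  unfolding I1_def
proof (induction rule: ideal_gen.induct)
  case zero show ?case using Delta_F_diff[of 0 0] by simp
next
  case (gen r) then show ?case by (rule Delta_F_Rel)
qed (simp_all add: Delta_F_add Delta_F_mult I2_def ideal_gen.intros)

lemma antipode_F_I1: "x \<in> I1 \<Longrightarrow> antipode_F x \<in> I1"
  unfolding I1_def
proof (induction rule: ideal_gen.induct)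
  case zero show ?case using antipode_F_diff[of 0 0] by (simp add: ideal_gen.zero)
next
  case (gen r) then show ?case using antipode_F_Rel by (simp add: I1_def)
qed (simp_all add: antipode_F_add antipode_F_mult ideal_gen.intros)

lemma counit_F_I1: "x \<in> I1 \<Longrightarrow> counit_F x = 0"
  unfolding I1_def
  by (induction rule: ideal_gen.induct) (simp_all add: counit_F_Rel counit_F.hom_zero counit_F_add counit_F_mult)

lemma alg_hom_mod_Delta_F: "alg_hom_mod I1 I2 Delta_F"
  unfolding alg_hom_mod_def
  by (auto simp: Delta_F_diff[symmetric] Delta_F_I1 Delta_F_add Delta_F_smul Delta_F_mult Delta_F_one)

lemma alg_antihom_mod_antipode_F: "alg_antihom_mod I1 I1 antipode_F"
  unfolding alg_antihom_mod_def
  by (auto simp: antipode_F_diff[symmetric] antipode_F_I1 antipode_F_add antipode_F_smul antipode_F_mult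
      antipode_F_one)

lemma char_mod_counit_F: "char_mod I1 counit_F"
  unfolding char_mod_def
proof (intro conjI allI impI)
  show "counit_F x = counit_F y" if "x - y \<in> I1" for x y
    using counit_F_I1[OF that] by (simp add: counit_F_diff)
qed (simp_all add: counit_F_add counit_F_smul counit_F_mult counit_F_one)

section \<open>Hopf algebra axioms\<close>

lemma tlift_Delta_F_Bg: "tlift h (Delta_F (Bg s i)) = h (Bg s i) 1 + h (Kg s) (Bg s i)"
  unfolding Delta_F_Bg tlift_add
  using tlift_tens_mono[of h "Word [B s i]" 0] tlift_tens_mono[of h "Word [K s]" "Word [B s i]"]
  by (simp add: Bg_def Kg_def X_def)

lemma tlift_Delta_F_Kg: "tlift h (Delta_F (Kg s)) = h (Kg s) (Kg s)"
  unfolding Delta_F_Kg using tlift_tens_mono[of h "Word [K s]" "Word [K s]"]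
  by (simp add: Kg_def X_def)

lemma coassociativity:
  "tlift (\<lambda>a b. tens21 (Delta_F a) b) (Delta_F x) = tlift (\<lambda>a b. tens12 a (Delta_F b)) (Delta_F x)"
proof (rule free_hom_eqI[where A="\<lambda>x. tlift (\<lambda>a b. tens21 (Delta_F a) b) (Delta_F x)"
      and B="\<lambda>x. tlift (\<lambda>a b. tens12 a (Delta_F b)) (Delta_F x)"])
  have "tlift (\<lambda>a b. tens21 (Delta_F a) b) (z * w)
      = tlift (\<lambda>a b. tens21 (Delta_F a) b) z * tlift (\<lambda>a b. tens21 (Delta_F a) b) w"
    and "tlift (\<lambda>a b. tens12 a (Delta_F b)) (z * w)
      = tlift (\<lambda>a b. tens12 a (Delta_F b)) z * tlift (\<lambda>a b. tens12 a (Delta_F b)) w" for z w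
    by (rule tlift_mult; simp add: mono_add Delta_F_mult tens21_mult tens12_mult)+
  then show "tlift (\<lambda>a b. tens21 (Delta_F a) b) (Delta_F (x * y))
      = tlift (\<lambda>a b. tens21 (Delta_F a) b) (Delta_F x) * tlift (\<lambda>a b. tens21 (Delta_F a) b) (Delta_F y)"
    and "tlift (\<lambda>a b. tens12 a (Delta_F b)) (Delta_F (x * y))
      = tlift (\<lambda>a b. tens12 a (Delta_F b)) (Delta_F x) * tlift (\<lambda>a b. tens12 a (Delta_F b)) (Delta_F y)" for x y
    by (simp_all add: Delta_F_mult)
  show "tlift (\<lambda>a b. tens21 (Delta_F a) b) (Delta_F (X g)) = tlift (\<lambda>a b. tens12 a (Delta_F b)) (Delta_F (X g))" for g
  proof (cases g)
    case (B s i)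
    show ?thesis unfolding B Bg_def[symmetric] tlift_Delta_F_Bg unfolding Delta_F_Bg Delta_F_Kg Delta_F_one tens_one
      by (rule poly_mapping_eqI, rename_tac k, case_tac k)
        (simp add: lookup_tens21 lookup_tens12 lookup_tens lookup_add tens21_add_left tens12_add_right
          lookup_one_pair algebra_simps)
  next
    case (K s)
    show ?thesis unfolding K Kg_def[symmetric] tlift_Delta_F_Kg unfolding Delta_F_Kg
      by (rule poly_mapping_eqI, rename_tac k, case_tac k)
        (simp add: lookup_tens21 lookup_tens12 lookup_tens algebra_simps)
  qed
qed (simp_all add: Delta_F_add Delta_F_smul Delta_F_one tlift_add tlift_smul tlift_one tens21_one tens12_one tens_one)

lemma counit_law_left: "tlift (\<lambda>a b. smul (counit_F a) b) (Delta_F x) = x"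
proof (rule free_hom_eqI[where A="\<lambda>x. tlift (\<lambda>a b. smul (counit_F a) b) (Delta_F x)" and B="\<lambda>x. x"])
  have "tlift (\<lambda>a b. smul (counit_F a) b) (z * w)
      = tlift (\<lambda>a b. smul (counit_F a) b) z * tlift (\<lambda>a b. smul (counit_F a) b) w" for z w
    by (rule tlift_mult) (simp add: mono_add counit_F_mult smul_smul mult.commute
        flip: smul_mult_left smul_mult_right)
  then show "tlift (\<lambda>a b. smul (counit_F a) b) (Delta_F (x * y))
      = tlift (\<lambda>a b. smul (counit_F a) b) (Delta_F x) * tlift (\<lambda>a b. smul (counit_F a) b) (Delta_F y)" for x y
    by (simp add: Delta_F_mult)
  show "tlift (\<lambda>a b. smul (counit_F a) b) (Delta_F (X g)) = X g" for g
    by (cases g) (simp_all add: Bg_def[symmetric] Kg_def[symmetric] tlift_Delta_F_Bg tlift_Delta_F_Kg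
        counit_F_Bg counit_F_Kg)
qed (simp_all add: Delta_F_add Delta_F_smul Delta_F_one tlift_add tlift_smul tlift_one counit_F_one)

lemma counit_law_right: "tlift (\<lambda>a b. smul (counit_F b) a) (Delta_F x) = x"
proof (rule free_hom_eqI[where A="\<lambda>x. tlift (\<lambda>a b. smul (counit_F b) a) (Delta_F x)" and B="\<lambda>x. x"])
  have "tlift (\<lambda>a b. smul (counit_F b) a) (z * w)
      = tlift (\<lambda>a b. smul (counit_F b) a) z * tlift (\<lambda>a b. smul (counit_F b) a) w" for z w
    by (rule tlift_mult) (simp add: mono_add counit_F_mult smul_smul mult.commute
        flip: smul_mult_left smul_mult_right)
  then show "tlift (\<lambda>a b. smul (counit_F b) a) (Delta_F (x * y))
      = tlift (\<lambda>a b. smul (counit_F b) a) (Delta_F x) * tlift (\<lambda>a b. smul (counit_F b) a) (Delta_F y)" for x y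
    by (simp add: Delta_F_mult)
  show "tlift (\<lambda>a b. smul (counit_F b) a) (Delta_F (X g)) = X g" for g
    by (cases g) (simp_all add: Bg_def[symmetric] Kg_def[symmetric] tlift_Delta_F_Bg tlift_Delta_F_Kg
        counit_F_Bg counit_F_Kg counit_F_one)
qed (simp_all add: Delta_F_add Delta_F_smul Delta_F_one tlift_add tlift_smul tlift_one counit_F_one)

definition mult_antipode_left :: "F2 \<Rightarrow> F" where
  "mult_antipode_left = tlift (\<lambda>a b. antipode_F a * b)"

definition mult_antipode_right :: "F2 \<Rightarrow> F" where
  "mult_antipode_right = tlift (\<lambda>a b. a * antipode_F b)"

lemma mult_antipode_left_single:
  "mult_antipode_left (Poly_Mapping.single q c) = smul c (antipode_F (mono (fst q)) * mono (snd q))"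
  by (simp add: mult_antipode_left_def tlift_single)

lemma mult_antipode_right_single:
  "mult_antipode_right (Poly_Mapping.single p c) = smul c (mono (fst p) * antipode_F (mono (snd p)))"
  by (simp add: mult_antipode_right_def tlift_single)

lemma mult_antipode_left_mult_single:
  "mult_antipode_left (z * Poly_Mapping.single q c)
   = smul c (antipode_F (mono (fst q)) * mult_antipode_left z * mono (snd q))"
  unfolding mult_antipode_left_def
proof (induction z rule: poly_mapping_induct_single)
  case zero then show ?case by (simp add: tlift_zero)
next
  case (single p d)
  have "tlift (\<lambda>a b. antipode_F a * b) (Poly_Mapping.single p d * Poly_Mapping.single q c)
      = smul (d * c) (antipode_F (mono (fst q)) * antipode_F (mono (fst p)) * (mono (snd p) * mono (snd q)))"
    by (simp add: mult_single tlift_single mono_add antipode_F_mult)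
  also have "\<dots> = smul c (antipode_F (mono (fst q)) * smul d (antipode_F (mono (fst p)) * mono (snd p)) * mono (snd q))"
    by (simp add: smul_smul mult.assoc mult.commute flip: smul_mult_left smul_mult_right)
  finally show ?case by (simp add: tlift_single)
next
  case (add x y) then show ?case by (simp add: distrib_right distrib_left tlift_add smul_add)
qed

lemma mult_antipode_right_single_mult:
  "mult_antipode_right (Poly_Mapping.single p c * w)
   = smul c (mono (fst p) * mult_antipode_right w * antipode_F (mono (snd p)))"
  unfolding mult_antipode_right_def
proof (induction w rule: poly_mapping_induct_single)
  case zero then show ?case by (simp add: tlift_zero)
next
  case (single q d)
  have "tlift (\<lambda>a b. a * antipode_F b) (Poly_Mapping.single p c * Poly_Mapping.single q d)
      = smul (c * d) (mono (fst p) * mono (fst q) * (antipode_F (mono (snd q)) * antipode_F (mono (snd p))))"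
    by (simp add: mult_single tlift_single mono_add antipode_F_mult)
  also have "\<dots> = smul c (mono (fst p) * smul d (mono (fst q) * antipode_F (mono (snd q))) * antipode_F (mono (snd p)))"
    by (simp add: smul_smul mult.assoc flip: smul_mult_left smul_mult_right)
  finally show ?case by (simp add: tlift_single)
next
  case (add x y) then show ?case by (simp add: distrib_right distrib_left tlift_add smul_add)
qed

text \<open>Neither map is multiplicative, but since S reverses products a factor on which the map is
  a scalar modulo I1 (on the left for the first map, on the right for the second) can be pulled
  out as that scalar.\<close>

lemma mult_antipode_left_mult_mod:
  assumes "mult_antipode_left z - smul c0 1 \<in> I1"
  shows "mult_antipode_left (z * w) - smul c0 (mult_antipode_left w) \<in> I1"
proof (induction w rule: poly_mapping_induct_single)
  case zero then show ?case by (simp add: mult_antipode_left_def tlift_zero)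
next
  case (single q c)
  have "mult_antipode_left (z * Poly_Mapping.single q c) - smul c0 (mult_antipode_left (Poly_Mapping.single q c))
     = smul c (antipode_F (mono (fst q)) * (mult_antipode_left z - smul c0 1) * mono (snd q))"
    by (simp add: mult_antipode_left_mult_single mult_antipode_left_single algebra_simps
        smul_diff smul_smul mult.commute flip: smul_mult_left smul_mult_right)
  moreover have "smul c (antipode_F (mono (fst q)) * (mult_antipode_left z - smul c0 1) * mono (snd q)) \<in> I1"
    using assms unfolding I1_def by (intro ideal_gen_smul ideal_gen_sandwich)
  ultimately show ?case by simp
next
  case (add x y)
  then show ?case
    using ideal_gen.add[OF add[unfolded I1_def]]
    by (simp add: I1_def mult_antipode_left_def distrib_left tlift_add smul_add algebra_simps)
qed

lemma mult_antipode_right_mult_mod: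
  assumes "mult_antipode_right w - smul c0 1 \<in> I1"
  shows "mult_antipode_right (z * w) - smul c0 (mult_antipode_right z) \<in> I1"
proof (induction z rule: poly_mapping_induct_single)
  case zero then show ?case by (simp add: mult_antipode_right_def tlift_zero)
next
  case (single p c)
  have "mult_antipode_right (Poly_Mapping.single p c * w) - smul c0 (mult_antipode_right (Poly_Mapping.single p c))
     = smul c (mono (fst p) * (mult_antipode_right w - smul c0 1) * antipode_F (mono (snd p)))"
    by (simp add: mult_antipode_right_single_mult mult_antipode_right_single algebra_simps
        smul_diff smul_smul mult.commute flip: smul_mult_left smul_mult_right)
  moreover have "smul c (mono (fst p) * (mult_antipode_right w - smul c0 1) * antipode_F (mono (snd p))) \<in> I1"
    using assms unfolding I1_def by (intro ideal_gen_smul ideal_gen_sandwich)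
  ultimately show ?case by simp
next
  case (add x y)
  then show ?case
    using ideal_gen.add[OF add[unfolded I1_def]]
    by (simp add: I1_def mult_antipode_right_def distrib_right tlift_add smul_add algebra_simps)
qed

lemma sneg_sneg [simp]: "sneg (sneg s) = s"
  by (cases s) simp_all

lemma antipode_law_left_generator: "mult_antipode_left (Delta_F (X g)) - smul (counit_F (X g)) 1 \<in> I1"
proof (cases g)
  case (B s i)
  have "mult_antipode_left (Delta_F (X g)) - smul (counit_F (X g)) 1 = acomm (Kg (sneg s)) (Bg s i)"
    unfolding B Bg_def[symmetric] mult_antipode_left_def tlift_Delta_F_Bg
    by (simp add: counit_F_Bg antipode_F_Bg antipode_F_Kg antipode_F_one acomm_def add.commute)
  then show ?thesis using Rel_members(3) by (simp add: I1_def ideal_gen.gen)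
next
  case (K s)
  have "mult_antipode_left (Delta_F (X g)) - smul (counit_F (X g)) 1 = Kg (sneg s) * Kg s - 1"
    unfolding K Kg_def[symmetric] mult_antipode_left_def tlift_Delta_F_Kg
    by (simp add: counit_F_Kg antipode_F_Kg)
  then show ?thesis using Rel_members(2)[of "sneg s"] by (simp add: I1_def ideal_gen.gen)
qed

lemma antipode_law_right_generator: "mult_antipode_right (Delta_F (X g)) - smul (counit_F (X g)) 1 \<in> I1"
proof (cases g)
  case (B s i)
  have "mult_antipode_right (Delta_F (X g)) - smul (counit_F (X g)) 1
      = acomm (Kg s) (Bg s i) * Kg (sneg s) - Bg s i * (Kg s * Kg (sneg s) - 1)"
    unfolding B Bg_def[symmetric] mult_antipode_right_def tlift_Delta_F_Bg
    by (simp add: counit_F_Bg antipode_F_Bg antipode_F_one acomm_def algebra_simps)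
  moreover have "acomm (Kg s) (Bg s i) * Kg (sneg s) - Bg s i * (Kg s * Kg (sneg s) - 1) \<in> I1"
    using Rel_members(2,3) unfolding I1_def
    by (intro ideal_gen_diff ideal_gen.rmult ideal_gen.lmult ideal_gen.gen)
  ultimately show ?thesis by simp
next
  case (K s)
  have "mult_antipode_right (Delta_F (X g)) - smul (counit_F (X g)) 1 = Kg s * Kg (sneg s) - 1"
    unfolding K Kg_def[symmetric] mult_antipode_right_def tlift_Delta_F_Kg
    by (simp add: counit_F_Kg antipode_F_Kg)
  then show ?thesis using Rel_members(2) by (simp add: I1_def ideal_gen.gen)
qed

lemma antipode_law_left: "mult_antipode_left (Delta_F x) - smul (counit_F x) 1 \<in> I1"
proof (induction x rule: free_alg_induct)
  case one
  show ?case by (simp add: mult_antipode_left_def Delta_F_one tlift_one antipode_F_one counit_F_one)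
next
  case (gen g) then show ?case by (rule antipode_law_left_generator)
next
  case (add x y)
  then show ?case
    using ideal_gen.add[OF add[unfolded I1_def]]
    by (simp add: I1_def mult_antipode_left_def Delta_F_add tlift_add counit_F_add smul_add_left algebra_simps)
next
  case (smul c x)
  have "mult_antipode_left (Delta_F (smul c x)) - smul (counit_F (smul c x)) 1
      = smul c (mult_antipode_left (Delta_F x) - smul (counit_F x) 1)"
    by (simp add: mult_antipode_left_def Delta_F_smul tlift_smul counit_F_smul smul_diff smul_smul)
  then show ?case using smul by (simp add: I1_def ideal_gen_smul)
next
  case (mult x y)
  have "mult_antipode_left (Delta_F (x * y)) - smul (counit_F (x * y)) 1
      = (mult_antipode_left (Delta_F x * Delta_F y) - smul (counit_F x) (mult_antipode_left (Delta_F y)))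
        + smul (counit_F x) (mult_antipode_left (Delta_F y) - smul (counit_F y) 1)"
    by (simp add: Delta_F_mult counit_F_mult smul_diff smul_smul)
  then show ?case
    using mult_antipode_left_mult_mod[OF mult(1), of "Delta_F y"] mult(2)
    by (simp add: I1_def ideal_gen.add ideal_gen_smul)
qed

lemma antipode_law_right: "mult_antipode_right (Delta_F x) - smul (counit_F x) 1 \<in> I1"
proof (induction x rule: free_alg_induct)
  case one
  show ?case by (simp add: mult_antipode_right_def Delta_F_one tlift_one antipode_F_one counit_F_one)
next
  case (gen g) then show ?case by (rule antipode_law_right_generator)
next
  case (add x y)
  then show ?case
    using ideal_gen.add[OF add[unfolded I1_def]]
    by (simp add: I1_def mult_antipode_right_def Delta_F_add tlift_add counit_F_add smul_add_left algebra_simps)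
next
  case (smul c x)
  have "mult_antipode_right (Delta_F (smul c x)) - smul (counit_F (smul c x)) 1
      = smul c (mult_antipode_right (Delta_F x) - smul (counit_F x) 1)"
    by (simp add: mult_antipode_right_def Delta_F_smul tlift_smul counit_F_smul smul_diff smul_smul)
  then show ?case using smul by (simp add: I1_def ideal_gen_smul)
next
  case (mult x y)
  have "mult_antipode_right (Delta_F (x * y)) - smul (counit_F (x * y)) 1
      = (mult_antipode_right (Delta_F x * Delta_F y) - smul (counit_F y) (mult_antipode_right (Delta_F x)))
        + smul (counit_F y) (mult_antipode_right (Delta_F x) - smul (counit_F x) 1)"
    by (simp add: Delta_F_mult counit_F_mult smul_diff smul_smul mult.commute)
  then show ?case
    using mult_antipode_right_mult_mod[OF mult(2), of "Delta_F x"] mult(1)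
    by (simp add: I1_def ideal_gen.add ideal_gen_smul)
qed

lemma hopf_axioms_free: "hopf_axioms Delta_F counit_F antipode_F"
  using antipode_law_left antipode_law_right
  by (simp add: hopf_axioms_def alg_hom_mod_Delta_F char_mod_counit_F coassociativity counit_law_left
      counit_law_right I3_def ideal_gen.zero mult_antipode_left_def mult_antipode_right_def)

lemma Delta_F_unique:
  assumes "alg_hom_mod I1 I2 D" and "Delta_gens D"
  shows "D x - Delta_F x \<in> I2"
  unfolding I2_def
proof (rule alg_hom_mod_unique[where D'=D and D=Delta_F])
  show "alg_hom_mod I1 (ideal_gen ({tens r 1 |r. r \<in> Rel} \<union> {tens 1 r |r. r \<in> Rel})) D"
    using assms(1) by (simp add: I2_def)
  show "D (X g) - Delta_F (X g) \<in> ideal_gen ({tens r 1 |r. r \<in> Rel} \<union> {tens 1 r |r. r \<in> Rel})" for g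
    using assms(2) unfolding Delta_gens_def I2_def[symmetric]
    by (cases g) (simp_all add: Bg_def[symmetric] Kg_def[symmetric] Delta_F_Bg Delta_F_Kg)
qed (simp_all add: Delta_F_add Delta_F_smul Delta_F_mult Delta_F_one)

lemma antipode_F_unique:
  assumes "alg_antihom_mod I1 I1 S" and "S_gens S"
  shows "S x - antipode_F x \<in> I1"
  unfolding I1_def
proof (rule alg_antihom_mod_unique[where D'=S and D=antipode_F])
  show "alg_antihom_mod I1 (ideal_gen Rel) S"
    using assms(1) by (simp add: I1_def)
  show "S (X g) - antipode_F (X g) \<in> ideal_gen Rel" for g
    using assms(2) unfolding S_gens_def I1_def[symmetric]
    by (cases g) (simp_all add: Bg_def[symmetric] Kg_def[symmetric] antipode_F_Bg antipode_F_Kg)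
qed (simp_all add: antipode_F_add antipode_F_smul antipode_F_mult antipode_F_one)

lemma counit_F_unique:
  assumes "char_mod I1 e" and "eps_gens e"
  shows "e x = counit_F x"
proof (rule char_mod_unique[OF assms(1)])
  show "e (X g) = counit_F (X g)" for g
    using assms(2) unfolding eps_gens_def
    by (cases g) (simp_all add: Bg_def[symmetric] Kg_def[symmetric] counit_F_Bg counit_F_Kg)
qed

theorem mainTheorem2:
  shows "\<exists>D e S.
     alg_hom_mod I1 I2 D \<and> Delta_gens D \<and>
     (\<forall>D'. alg_hom_mod I1 I2 D' \<and> Delta_gens D' \<longrightarrow> (\<forall>x. D' x - D x \<in> I2)) \<and>
     char_mod I1 e \<and> eps_gens e \<and>
     (\<forall>e'. char_mod I1 e' \<and> eps_gens e' \<longrightarrow> (\<forall>x. e' x = e x)) \<and>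
     alg_antihom_mod I1 I1 S \<and> S_gens S \<and>
     (\<forall>S'. alg_antihom_mod I1 I1 S' \<and> S_gens S' \<longrightarrow> (\<forall>x. S' x - S x \<in> I1)) \<and>
     hopf_axioms D e S"
proof (intro exI[of _ Delta_F] exI[of _ counit_F] exI[of _ antipode_F] conjI allI impI)
  show "Delta_gens Delta_F" by (simp add: Delta_gens_def Delta_F_Bg Delta_F_Kg)
  show "eps_gens counit_F" by (simp add: eps_gens_def counit_F_Bg counit_F_Kg)
  show "S_gens antipode_F" by (simp add: S_gens_def antipode_F_Bg antipode_F_Kg)
qed (simp_all add: alg_hom_mod_Delta_F char_mod_counit_F alg_antihom_mod_antipode_F hopf_axioms_free
    Delta_F_unique counit_F_unique antipode_F_unique)

end
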